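(* Suppose $\mathcal Q$ is vertically unbounded. Let $0\le k<\ell\le D$, let $\alpha\in\mathcal B_\ell$ be sharp and let $\beta\in\mathcal B_k$. Put $\lambda=(\beta-\alpha)/(\ell-k)\in\Gamma$ (so $-\lambda$ is the slope of the segment joining $(\ell,\alpha)$ and $(k,\beta)$). Then there exists $R\in\mathcal Q$ with $\gamma_R>\lambda$.
   Context: Let $(K,v)$ be a valued field, $\Gamma$ the divisible hull of $vK$, embedded in a divisible ordered abelian group $\Lambda$. Let $\nu\colon K[x]\to\Lambda\cup\{\infty\}$ be a valuation extending $v$ which is well-specified, i.e. it is not the case that simultaneously $\nu^{-1}(\infty)=0$, the value group of $\nu$ modulo $\Gamma$ is torsion, and the residue field of $\nu$ is algebraic over that of $v$. For $s\ge0$ let $\partial_s$ be the $s$-th Hasse–Schmidt derivative, defined by $f(x+y)=\sum_{s\ge0}(\partial_sf)y^s$. For nonconstant $f$ with $\nu(f)<\infty$ the level is $\epsilon_\nu(f)=\max\{(\nu(f)-\nu(\partial_sf))/s: s\ge1\}$; $\epsilon_\nu(a)=-\infty$ for $a\in K$. A monic $Q\in K[x]$ is a key polynomial for $\nu$ if $\epsilon_\nu(f)<\epsilon_\nu(Q)$ whenever $\deg f<\deg Q$. For monic $Q$, each $f$ has a unique $Q$-expansion $f=\sum_{i\ge0}f_{Q,i}Q^i$ with $\deg f_{Q,i}<\deg Q$; set $\nu_Q(f)=\min_i\nu(f_{Q,i}Q^i)$. Fix $m\ge1$ such that the set $\Psi_m$ of key polynomials of degree $m$ for $\nu$ is nonempty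 and has no element of maximal $\nu$-value. Let $\mathcal Q\subseteq\Psi_m$ be well-ordered by $Q<R\iff\nu(Q)<\nu(R)$ and cofinal in $\Psi_m$ for $\nu$-values; write $\gamma_Q=\nu(Q)$. As in the paper, all values $\nu_Q(f)$ ($f\ne0$) lie in $\Gamma$. $f$ is $\mathcal Q$-stable if $\nu_Q(f)=\nu(f)$ for all $Q$ in a final segment of $\mathcal Q$, $\mathcal Q$-unstable otherwise. Assume unstable polynomials exist; limit key polynomials are the monic $\mathcal Q$-unstable polynomials of minimal degree, forming $\mathrm{KP}_\infty(\mathcal Q)$. Fix $F\in\mathrm{KP}_\infty(\mathcal Q)$ and $D=\lfloor\deg F/m\rfloor$. Let $\delta^L$ be the smallest initial segment of $\Gamma$ containing $\{\nu_Q(F):Q\in\mathcal Q\}$. A cut $\eta=(\eta^L,\eta^R)$ of $\Gamma$ is vertically bounded if for every $x\in\eta^L$ and rational $q>1$ there is $y\in\eta^L$ with $q(y-x)>z-x$ for all $z\in\eta^L$; its invariance group is $\{h\in\Gamma:h+\eta^L=\eta^L\}$. Let $\gamma_{\mathcal Q}$ be the cut whose lower set is the smallest initial segment containing $\{\gamma_Q\}$; $\mathcal Q$ is vertically unbounded if $\gamma_{\mathcal Q}$ is not vertically bounded; $H$ denotes the invariance group of $\gamma_{\mathcal Q}$. For $\ell\in\{0,\dots,D\}$, $\mathcal B_\ell$ is the smallest initial segment of $\Gamma$ containing all $\beta\in\Gamma$ such that $\beta+\ell\gamma_Q\in\delta^L$ for some $Q\in\mathcal Q$. An element $\alpha\in\mathcal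 B_\ell$ is sharp if $\alpha+H$ is a final segment of $\mathcal B_\ell$, i.e. $\alpha+H\subseteq\mathcal B_\ell$ and every element of $\mathcal B_\ell$ is smaller than $\alpha+h$ for some $h\in H$. *)

theory Defs
  imports "HOL-Library.Extended" "HOL-Computational_Algebra.Polynomial"
begin

definition nmul :: "nat \<Rightarrow> 'g::monoid_add \<Rightarrow> 'g" where
  "nmul n g = (((+) g) ^^ n) 0"

definition zmul :: "int \<Rightarrow> 'g::group_add \<Rightarrow> 'g" where
  "zmul z g = (if 0 \<le> z then nmul (nat z) g else - nmul (nat (- z)) g)"

text \<open>Division by a positive integer (unique in a torsion-free divisible group).\<close>
definition divn :: "nat \<Rightarrow> 'g::group_add \<Rightarrow> 'g" where
  "divn n g = (THE y. nmul n y = g)"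

definition qmul :: "rat \<Rightarrow> 'g::group_add \<Rightarrow> 'g" where
  "qmul q g = (case quotient_of q of (a, b) \<Rightarrow> divn (nat b) (zmul a g))"

definition divisible_group :: "'g::linordered_ab_group_add itself \<Rightarrow> bool" where
  "divisible_group _ \<longleftrightarrow> (\<forall>(g::'g) n. 0 < n \<longrightarrow> (\<exists>y. nmul n y = g))"

text \<open>Values in \<Lambda> \<union> {\<infinity>} are represented in 'g extended, using Fin and Pinf only.\<close>

definition field_valuation :: "('k::field \<Rightarrow> 'g::linordered_ab_group_add extended) \<Rightarrow> bool" where
  "field_valuation v \<longleftrightarrow>
     (\<forall>a. v a = Pinf \<longleftrightarrow> a = 0) \<and> (\<forall>a. v a \<noteq> Minf) \<and>
     (\<forall>a b. v (a * b) = v a + v b) \<and> (\<forall>a b. min (v a) (v b) \<le> v (a + b))"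

definition poly_valuation :: "('k::field poly \<Rightarrow> 'g::linordered_ab_group_add extended) \<Rightarrow> bool" where
  "poly_valuation \<nu> \<longleftrightarrow>
     \<nu> 0 = Pinf \<and> \<nu> 1 = Fin 0 \<and> (\<forall>f. \<nu> f \<noteq> Minf) \<and>
     (\<forall>f g. \<nu> (f * g) = \<nu> f + \<nu> g) \<and> (\<forall>f g. min (\<nu> f) (\<nu> g) \<le> \<nu> (f + g))"

definition value_group :: "('k::field \<Rightarrow> 'g::linordered_ab_group_add extended) \<Rightarrow> 'g set" where
  "value_group v = {\<gamma>. \<exists>a. a \<noteq> 0 \<and> v a = Fin \<gamma>}"

definition div_hull :: "('k::field \<Rightarrow> 'g::linordered_ab_group_add extended) \<Rightarrow> 'g set" where
  "div_hull v = {\<gamma>. \<exists>n>0. nmul n \<gamma> \<in> value_group v}"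

text \<open>Well-specified: not simultaneously (support trivial, value group of \<nu> torsion mod \<Gamma>,
  residue field of \<nu> algebraic over that of v).  When the support is trivial, \<nu> extends to K(x);
  the residue class of f/g (\<nu> f \<ge> \<nu> g) is algebraic over the residue field of v iff some monic
  polynomial with v-integral coefficients c_i satisfies \<nu>(\<Sum> c_i (f/g)^i) > 0.\<close>
definition well_specified ::
  "('k::field \<Rightarrow> 'g::linordered_ab_group_add extended) \<Rightarrow> ('k poly \<Rightarrow> 'g extended) \<Rightarrow> bool" where
  "well_specified v \<nu> \<longleftrightarrow> \<not> (
     (\<forall>f. \<nu> f = Pinf \<longleftrightarrow> f = 0) \<and>
     (\<forall>f g \<gamma>f \<gamma>g. f \<noteq> 0 \<longrightarrow> g \<noteq> 0 \<longrightarrow> \<nu> f = Fin \<gamma>f \<longrightarrow> \<nu> g = Fin \<gamma>g \<longrightarrow>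
        (\<exists>n>0. nmul n (\<gamma>f - \<gamma>g) \<in> div_hull v)) \<and>
     (\<forall>f g \<gamma>g. g \<noteq> 0 \<longrightarrow> \<nu> g = Fin \<gamma>g \<longrightarrow> \<nu> g \<le> \<nu> f \<longrightarrow>
        (\<exists>n c. 1 \<le> n \<and> c n = 1 \<and> (\<forall>i\<le>n. Fin 0 \<le> v (c i)) \<and>
               Fin (nmul n \<gamma>g) < \<nu> (\<Sum>i\<le>n. smult (c i) (f ^ i * g ^ (n - i))))))"

text \<open>f(x+y) as a polynomial in y over K[x]; \<partial>_s f is its s-th coefficient.\<close>
definition hasse :: "nat \<Rightarrow> 'k::field poly \<Rightarrow> 'k poly" where
  "hasse s f = coeff (pcompose (map_poly (\<lambda>a. [:a:]) f) [:[:0, 1:], 1:]) s"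

text \<open>Level \<epsilon>_\<nu>(f) = max_{s\<ge>1} (\<nu> f - \<nu> \<partial>_s f)/s, with -\<infinity> for constants; terms with
  \<nu>(\<partial>_s f) = \<infinity> contribute -\<infinity> (for s > deg f this is always the case).
  (Totalisation: if \<nu> f = \<infinity> the finite terms are +\<infinity>.)\<close>
definition level :: "('k::field poly \<Rightarrow> 'g::linordered_ab_group_add extended) \<Rightarrow> 'k poly \<Rightarrow> 'g extended" where
  "level \<nu> f = (if degree f = 0 then Minf else
     Max ((\<lambda>s. case \<nu> (hasse s f) of
                 Fin d \<Rightarrow> (case \<nu> f of Fin e \<Rightarrow> Fin (divn s (e - d)) | _ \<Rightarrow> Pinf)
               | _ \<Rightarrow> Minf) ` {1..degree f}))"

definition key_poly :: "('k::field poly \<Rightarrow> 'g::linordered_ab_group_add extended) \<Rightarrow> 'k poly \<Rightarrow> bool" where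
  "key_poly \<nu> Q \<longleftrightarrow> lead_coeff Q = 1 \<and> (\<forall>f. degree f < degree Q \<longrightarrow> level \<nu> f < level \<nu> Q)"

definition Psi :: "('k::field poly \<Rightarrow> 'g::linordered_ab_group_add extended) \<Rightarrow> nat \<Rightarrow> 'k poly set" where
  "Psi \<nu> m = {Q. key_poly \<nu> Q \<and> degree Q = m}"

definition qcoeff :: "'k::field poly \<Rightarrow> 'k poly \<Rightarrow> nat \<Rightarrow> 'k poly" where
  "qcoeff Q f i = (f div Q ^ i) mod Q"

definition nuQ :: "('k::field poly \<Rightarrow> 'g::linordered_ab_group_add extended) \<Rightarrow> 'k poly \<Rightarrow> 'k poly \<Rightarrow> 'g extended" where
  "nuQ \<nu> Q f = Min ((\<lambda>i. \<nu> (qcoeff Q f i * Q ^ i)) ` {..degree f})"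

definition well_ordered_by_value :: "('k::field poly \<Rightarrow> 'g::linordered_ab_group_add extended) \<Rightarrow> 'k poly set \<Rightarrow> bool" where
  "well_ordered_by_value \<nu> QQ \<longleftrightarrow> inj_on \<nu> QQ \<and>
     (\<forall>S. S \<subseteq> QQ \<longrightarrow> S \<noteq> {} \<longrightarrow> (\<exists>Q\<in>S. \<forall>R\<in>S. \<nu> Q \<le> \<nu> R))"

definition stable :: "('k::field poly \<Rightarrow> 'g::linordered_ab_group_add extended) \<Rightarrow> 'k poly set \<Rightarrow> 'k poly \<Rightarrow> bool" where
  "stable \<nu> QQ f \<longleftrightarrow> (\<exists>Q0\<in>QQ. \<forall>Q\<in>QQ. \<nu> Q0 \<le> \<nu> Q \<longrightarrow> nuQ \<nu> Q f = \<nu> f)"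

definition KP_inf :: "('k::field poly \<Rightarrow> 'g::linordered_ab_group_add extended) \<Rightarrow> 'k poly set \<Rightarrow> 'k poly set" where
  "KP_inf \<nu> QQ = {F. lead_coeff F = 1 \<and> \<not> stable \<nu> QQ F \<and>
                     (\<forall>g. \<not> stable \<nu> QQ g \<longrightarrow> degree F \<le> degree g)}"

definition init_seg :: "'g::linorder set \<Rightarrow> 'g set \<Rightarrow> 'g set" where
  "init_seg G S = {x \<in> G. \<exists>s\<in>S. x \<le> s}"

definition vert_bounded :: "'g::linordered_ab_group_add set \<Rightarrow> bool" where
  "vert_bounded L \<longleftrightarrow>
     (\<forall>x\<in>L. \<forall>q::rat. 1 < q \<longrightarrow> (\<exists>y\<in>L. \<forall>z\<in>L. z - x < qmul q (y - x)))"

definition inv_group :: "'g::linordered_ab_group_add set \<Rightarrow> 'g set \<Rightarrow> 'g set" where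
  "inv_group G L = {h \<in> G. (\<lambda>x. h + x) ` L = L}"

definition deltaL :: "('k::field \<Rightarrow> 'g::linordered_ab_group_add extended) \<Rightarrow> ('k poly \<Rightarrow> 'g extended)
    \<Rightarrow> 'k poly set \<Rightarrow> 'k poly \<Rightarrow> 'g set" where
  "deltaL v \<nu> QQ F = init_seg (div_hull v) {\<gamma>. \<exists>Q\<in>QQ. nuQ \<nu> Q F = Fin \<gamma>}"

definition gammaL :: "('k::field \<Rightarrow> 'g::linordered_ab_group_add extended) \<Rightarrow> ('k poly \<Rightarrow> 'g extended)
    \<Rightarrow> 'k poly set \<Rightarrow> 'g set" where
  "gammaL v \<nu> QQ = init_seg (div_hull v) {\<gamma>. \<exists>Q\<in>QQ. \<nu> Q = Fin \<gamma>}"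

definition Bset :: "('k::field \<Rightarrow> 'g::linordered_ab_group_add extended) \<Rightarrow> ('k poly \<Rightarrow> 'g extended)
    \<Rightarrow> 'k poly set \<Rightarrow> 'k poly \<Rightarrow> nat \<Rightarrow> 'g set" where
  "Bset v \<nu> QQ F l = init_seg (div_hull v)
     {\<beta> \<in> div_hull v. \<exists>Q\<in>QQ. \<exists>\<gamma>. \<nu> Q = Fin \<gamma> \<and> \<beta> + nmul l \<gamma> \<in> deltaL v \<nu> QQ F}"

definition sharp :: "'g::linordered_ab_group_add set \<Rightarrow> 'g set \<Rightarrow> 'g \<Rightarrow> bool" where
  "sharp H B \<alpha> \<longleftrightarrow> \<alpha> \<in> B \<and> (\<forall>h\<in>H. \<alpha> + h \<in> B) \<and> (\<forall>b\<in>B. \<exists>h\<in>H. b < \<alpha> + h)"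

end

theory Submission
  imports Defs
begin

text \<open>
  Write \<open>n = l - k\<close>. The segment \<open>\<B>\<^sub>k\<close> is witnessed by some \<open>b\<^sub>0 \<ge> \<beta>\<close> and \<open>Q \<in> \<Q>\<close> with
  \<open>b\<^sub>0 + k\<gamma>\<^sub>Q \<in> \<delta>\<^sup>L\<close>; then \<open>b\<^sub>0 - n\<gamma>\<^sub>Q\<close> lies in \<open>\<B>\<^sub>l\<close>, so sharpness of \<open>\<alpha>\<close> yields \<open>h \<in> H\<close> with
  \<open>b\<^sub>0 - n\<gamma>\<^sub>Q < \<alpha> + h\<close>, i.e. \<open>n\<lambda> < n\<gamma>\<^sub>Q + h\<close>. If \<open>h \<le> 0\<close>, \<open>R = Q\<close> works. Otherwise invariance of
  the cut under \<open>h\<close> puts \<open>\<gamma>\<^sub>Q + h\<close> below some \<open>\<gamma>\<^sub>R\<close>, and \<open>n\<gamma>\<^sub>Q + h \<le> n(\<gamma>\<^sub>Q + h) \<le> n\<gamma>\<^sub>R\<close>.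
\<close>

lemma nmul_0 [simp]: "nmul 0 g = 0"
  by (simp add: nmul_def)

lemma nmul_Suc [simp]: "nmul (Suc n) g = g + nmul n g"
  by (simp add: nmul_def)

lemma nmul_zero [simp]: "nmul n (0::'g::monoid_add) = 0"
  by (induction n) simp_all

lemma nmul_add_nat: "nmul (a + b) (x::'g::ab_group_add) = nmul a x + nmul b x"
  by (induction a) (auto simp: add.assoc)

lemma nmul_add: "nmul n ((x::'g::ab_group_add) + y) = nmul n x + nmul n y"
  by (induction n) (auto simp: algebra_simps)

lemma nmul_diff: "nmul n ((x::'g::ab_group_add) - y) = nmul n x - nmul n y"
  by (induction n) (auto simp: algebra_simps)

lemma nmul_mult: "nmul (a * b) (x::'g::ab_group_add) = nmul a (nmul b x)"
  by (induction a) (auto simp: nmul_add_nat nmul_add)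

lemma nmul_mono: "(x::'g::linordered_ab_group_add) \<le> y \<Longrightarrow> nmul n x \<le> nmul n y"
  by (induction n) (auto intro: add_mono)

lemma nmul_strict_mono:
  "(x::'g::linordered_ab_group_add) < y \<Longrightarrow> 0 < n \<Longrightarrow> nmul n x < nmul n y"
proof (induction n)
  case (Suc n)
  then show ?case
    using nmul_mono[of x y n] by (cases n) (auto intro: add_less_le_mono)
qed simp

lemma nmul_less_cancel: "nmul n (x::'g::linordered_ab_group_add) < nmul n y \<Longrightarrow> x < y"
  using nmul_mono[of y x n] by (meson not_le)

lemma le_nmul_self: "0 \<le> (h::'g::linordered_ab_group_add) \<Longrightarrow> 0 < n \<Longrightarrow> h \<le> nmul n h"
  using nmul_mono[of 0 h "n - 1"] by (cases n) auto

lemma nmul_divn: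
  assumes "divisible_group TYPE('g::linordered_ab_group_add)" and "0 < n"
  shows "nmul n (divn n (g::'g)) = g"
proof -
  obtain y where y: "nmul n y = g"
    using assms unfolding divisible_group_def by blast
  have "z = y" if "nmul n z = g" for z
    using nmul_strict_mono[of z y n] nmul_strict_mono[of y z n] \<open>0 < n\<close> that y
    by (metis less_irrefl linorder_neqE)
  then have "divn n g = y"
    unfolding divn_def using y by (rule the_equality[rotated])
  with y show ?thesis by simp
qed

lemma field_valuation_one:
  assumes "field_valuation v" shows "v 1 = Fin 0"
proof -
  have "v 1 = v 1 + v 1" "v 1 \<noteq> Pinf" "v 1 \<noteq> Minf"
    using assms unfolding field_valuation_def by (metis mult_1, simp, blast)
  then show ?thesis by (cases "v 1") auto
qed

lemma zero_in_value_group: "field_valuation v \<Longrightarrow> 0 \<in> value_group v"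
  unfolding value_group_def using field_valuation_one one_neq_zero by blast

lemma value_group_diff:
  assumes fv: "field_valuation v" and "x \<in> value_group v" "y \<in> value_group v"
  shows "x - y \<in> value_group v"
proof -
  obtain a b where a: "a \<noteq> 0" "v a = Fin x" and b: "b \<noteq> 0" "v b = Fin y"
    using assms unfolding value_group_def by auto
  have "v (b * (a / b)) = v b + v (a / b)"
    using fv unfolding field_valuation_def by blast
  then have "v a = v b + v (a / b)"
    using b(1) by simp
  moreover obtain z where z: "v (a / b) = Fin z"
    using fv a(1) b(1) unfolding field_valuation_def by (cases "v (a / b)") auto
  ultimately have "x = y + z"
    using a(2) b(2) by simp
  then have "x - y = z"
    by (simp add: algebra_simps)
  moreover have "a / b \<noteq> 0"
    using a(1) b(1) by simp
  ultimately show ?thesis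
    unfolding value_group_def using z by blast
qed

lemma nmul_in_value_group:
  assumes fv: "field_valuation v" and x: "x \<in> value_group v"
  shows "nmul n x \<in> value_group v"
proof (induction n)
  case (Suc n)
  have "x - (0 - nmul n x) \<in> value_group v"
    using value_group_diff[OF fv x value_group_diff[OF fv zero_in_value_group[OF fv] Suc.IH]] .
  then show ?case by simp
qed (simp add: zero_in_value_group[OF fv])

lemma div_hull_diff:
  assumes fv: "field_valuation v" and "x \<in> div_hull v" "y \<in> div_hull v"
  shows "x - y \<in> div_hull v"
proof -
  obtain n m where n: "n > 0" "nmul n x \<in> value_group v" and m: "m > 0" "nmul m y \<in> value_group v"
    using assms unfolding div_hull_def by auto
  have "nmul (m * n) (x - y) = nmul m (nmul n x) - nmul n (nmul m y)"
    by (metis nmul_diff nmul_mult mult.commute)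
  also have "\<dots> \<in> value_group v"
    using value_group_diff[OF fv nmul_in_value_group[OF fv n(2)] nmul_in_value_group[OF fv m(2)]] .
  finally show ?thesis
    unfolding div_hull_def using n(1) m(1) by (metis (mono_tags) mem_Collect_eq nat_0_less_mult_iff)
qed

lemma nmul_in_div_hull:
  assumes fv: "field_valuation v" and "x \<in> div_hull v"
  shows "nmul l x \<in> div_hull v"
proof -
  obtain n where n: "n > 0" "nmul n x \<in> value_group v"
    using assms unfolding div_hull_def by auto
  have "nmul n (nmul l x) = nmul l (nmul n x)"
    by (metis nmul_mult mult.commute)
  then show ?thesis
    unfolding div_hull_def using n nmul_in_value_group[OF fv n(2)] by auto
qed

lemma div_hull_nmul_cancel:
  assumes "nmul l x \<in> div_hull v" and "0 < l"
  shows "x \<in> div_hull v"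
proof -
  obtain n where "n > 0" "nmul (n * l) x \<in> value_group v"
    using assms unfolding div_hull_def by (auto simp: nmul_mult)
  then show ?thesis
    unfolding div_hull_def using \<open>0 < l\<close> by (metis (mono_tags) mem_Collect_eq nat_0_less_mult_iff)
qed

lemma init_seg_invariant_bound:
  fixes S :: "'g::linordered_ab_group_add set"
  assumes h: "h \<in> inv_group G (init_seg G S)" and \<gamma>: "\<gamma> \<in> init_seg G S"
    and "0 < n" and x: "x < nmul n \<gamma> + h"
  shows "\<exists>s\<in>S. x < nmul n s"
proof (cases "h \<le> 0")
  case True
  obtain s where "s \<in> S" "\<gamma> \<le> s"
    using \<gamma> unfolding init_seg_def by blast
  moreover have "x < nmul n \<gamma>"
    using x True by (meson add_le_same_cancel1 less_le_trans)
  ultimately show ?thesis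
    using nmul_mono[of \<gamma> s n] by (meson less_le_trans)
next
  case False
  have "h + \<gamma> \<in> init_seg G S"
    using h \<gamma> unfolding inv_group_def by blast
  then obtain s where "s \<in> S" "h + \<gamma> \<le> s"
    unfolding init_seg_def by blast
  moreover have "nmul n \<gamma> + h \<le> nmul n (\<gamma> + h)"
    using le_nmul_self[of h n] False \<open>0 < n\<close> by (simp add: nmul_add)
  ultimately show ?thesis
    using x nmul_mono[of "\<gamma> + h" s n] by (metis add.commute le_less_trans less_le_trans)
qed

lemma value_in_gammaL:
  "Q \<in> QQ \<Longrightarrow> \<nu> Q = Fin \<gamma> \<Longrightarrow> \<gamma> \<in> div_hull v \<Longrightarrow> \<gamma> \<in> gammaL v \<nu> QQ"
  unfolding gammaL_def init_seg_def by blast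

text \<open>For \<open>k = 0\<close> the witnessing value plays no role, so any value lying in the hull will do.\<close>

lemma Bset_witness:
  assumes fv: "field_valuation v" and \<beta>: "\<beta> \<in> Bset v \<nu> QQ F k"
    and "0 < k \<or> (\<exists>Q\<in>QQ. \<exists>\<gamma>\<in>div_hull v. \<nu> Q = Fin \<gamma>)"
  shows "\<exists>b Q \<gamma>. \<beta> \<le> b \<and> b \<in> div_hull v \<and> Q \<in> QQ \<and> \<nu> Q = Fin \<gamma> \<and> \<gamma> \<in> div_hull v
           \<and> b + nmul k \<gamma> \<in> deltaL v \<nu> QQ F"
proof -
  obtain b Q \<gamma> where b: "\<beta> \<le> b" "b \<in> div_hull v" "Q \<in> QQ" "\<nu> Q = Fin \<gamma>"
      "b + nmul k \<gamma> \<in> deltaL v \<nu> QQ F"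
    using \<beta> unfolding Bset_def init_seg_def by auto
  show ?thesis
  proof (cases "k = 0")
    case True
    with assms(3) b show ?thesis by auto
  next
    case False
    have "nmul k \<gamma> = (b + nmul k \<gamma>) - b" by simp
    also have "\<dots> \<in> div_hull v"
      using div_hull_diff[OF fv _ b(2)] b(5) unfolding deltaL_def init_seg_def by blast
    finally have "\<gamma> \<in> div_hull v"
      using div_hull_nmul_cancel False by blast
    with b show ?thesis by blast
  qed
qed

lemma Bset_shift:
  assumes fv: "field_valuation v" and "k \<le> l" and "b \<in> div_hull v" "Q \<in> QQ" "\<nu> Q = Fin \<gamma>"
    "\<gamma> \<in> div_hull v" and b: "b + nmul k \<gamma> \<in> deltaL v \<nu> QQ F"
  shows "b - nmul (l - k) \<gamma> \<in> Bset v \<nu> QQ F l"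
proof -
  have shift: "b - nmul (l - k) \<gamma> + nmul l \<gamma> = b + nmul k \<gamma>"
    using nmul_add_nat[of "l - k" k \<gamma>] \<open>k \<le> l\<close> by simp
  have "b - nmul (l - k) \<gamma> + nmul l \<gamma> \<in> deltaL v \<nu> QQ F"
    unfolding shift by (rule b)
  moreover have "b - nmul (l - k) \<gamma> \<in> div_hull v"
    using assms by (blast intro: div_hull_diff nmul_in_div_hull)
  ultimately show ?thesis
    using \<open>Q \<in> QQ\<close> \<open>\<nu> Q = Fin \<gamma>\<close> unfolding Bset_def init_seg_def by blast
qed

theorem mainTheorem12:
  fixes v :: "'k::field \<Rightarrow> 'g::linordered_ab_group_add extended"
    and \<nu> :: "'k poly \<Rightarrow> 'g extended"
    and m :: nat and QQ :: "'k poly set" and F :: "'k poly"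
    and k l :: nat and \<alpha> \<beta> :: 'g
  assumes divisible: "divisible_group TYPE('g)"
    and v_val: "field_valuation v"
    and nu_val: "poly_valuation \<nu>"
    and extends: "\<forall>a. \<nu> [:a:] = v a"
    and well_spec: "well_specified v \<nu>"
    and m_pos: "1 \<le> m"
    and Psi_ne: "Psi \<nu> m \<noteq> {}"
    and Psi_nomax: "\<forall>P\<in>Psi \<nu> m. \<exists>P'\<in>Psi \<nu> m. \<nu> P < \<nu> P'"
    and QQ_sub: "QQ \<subseteq> Psi \<nu> m"
    and QQ_wo: "well_ordered_by_value \<nu> QQ"
    and QQ_cofinal: "\<forall>P\<in>Psi \<nu> m. \<exists>Q\<in>QQ. \<nu> P \<le> \<nu> Q"
    and unstable_ex: "\<exists>f. \<not> stable \<nu> QQ f"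
    and F_lim: "F \<in> KP_inf \<nu> QQ"
    and vert_unb: "\<not> vert_bounded (gammaL v \<nu> QQ)"
    and kl: "k < l" and lD: "l \<le> degree F div m"
    and \<alpha>_sharp: "sharp (inv_group (div_hull v) (gammaL v \<nu> QQ)) (Bset v \<nu> QQ F l) \<alpha>"
    and \<beta>_in: "\<beta> \<in> Bset v \<nu> QQ F k"
  shows "\<exists>R\<in>QQ. Fin (divn (l - k) (\<beta> - \<alpha>)) < \<nu> R"
proof -
  define n and slope where "n = l - k" and "slope = divn n (\<beta> - \<alpha>)"
  have "0 < n" using kl by (simp add: n_def)
  have "\<exists>Q\<in>QQ. \<exists>\<gamma>\<in>div_hull v. \<nu> Q = Fin \<gamma>"
    using Bset_witness[OF v_val _, of \<alpha> \<nu> QQ F l] \<alpha>_sharp kl unfolding sharp_def by auto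
  then obtain b Q \<gamma> where b: "\<beta> \<le> b" "b \<in> div_hull v" "Q \<in> QQ" "\<nu> Q = Fin \<gamma>"
      "\<gamma> \<in> div_hull v" "b + nmul k \<gamma> \<in> deltaL v \<nu> QQ F"
    using Bset_witness[OF v_val \<beta>_in] by blast
  then have "b - nmul n \<gamma> \<in> Bset v \<nu> QQ F l"
    unfolding n_def using Bset_shift[OF v_val] kl by simp
  then obtain h where h: "h \<in> inv_group (div_hull v) (gammaL v \<nu> QQ)" "b - nmul n \<gamma> < \<alpha> + h"
    using \<alpha>_sharp unfolding sharp_def by blast
  have "\<beta> - \<alpha> < nmul n \<gamma> + h"
    using le_less_trans[OF b(1), of "\<alpha> + h + nmul n \<gamma>"] h(2) by (simp add: algebra_simps)
  then have "nmul n slope < nmul n \<gamma> + h"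
    unfolding slope_def nmul_divn[OF divisible \<open>0 < n\<close>] .
  moreover have "\<gamma> \<in> gammaL v \<nu> QQ"
    using b(3-5) by (rule value_in_gammaL)
  ultimately obtain R s where R: "R \<in> QQ" "\<nu> R = Fin s" and "nmul n slope < nmul n s"
    using init_seg_invariant_bound[OF h(1)[unfolded gammaL_def] _ \<open>0 < n\<close>]
    unfolding gammaL_def by blast
  then have "Fin slope < \<nu> R"
    using nmul_less_cancel by simp
  with R(1) show ?thesis
    unfolding slope_def n_def by blast
qed

end
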